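(* Let $F(x)=\frac{1-x-\sqrt{1-2x-3x^2}}{2x^2}$ be the generating function of the Motzkin numbers. Then for all $n\in\mathbb{N}$: $D_{2,-1}(n)=1$ if $n\equiv0\pmod 4$, $0$ if $n\equiv1,3\pmod4$, $-1$ if $n\equiv2\pmod4$; $D_{2,-2}(n)=1$ if $n\equiv0,9,10,11\pmod{12}$, $0$ if $n\equiv1,2,7,8\pmod{12}$, $-1$ if $n\equiv3,4,5,6\pmod{12}$. Moreover, for $n\ge4$: $D_{2,-3}(n)=1$ if $n\equiv0,4\pmod{12}$; $0$ if $n\equiv2,8\pmod{12}$; $-1$ if $n\equiv6,10\pmod{12}$; and, writing $k=\lfloor n/12\rfloor$, $D_{2,-3}(12k+1)=8k$, $D_{2,-3}(12k+3)=-8k$, $D_{2,-3}(12k+5)=8k+2$, $D_{2,-3}(12k+7)=-8k-4$, $D_{2,-3}(12k+9)=8k+4$, $D_{2,-3}(12k+11)=-8k-6$.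
   Context: For a power series $F(x)=\sum_{n\ge0}a_nx^n$ and $K\ge1$, write $F(x)^K=\sum_{n\ge0}a_{K,n}x^n$ and set $a_{K,n}=0$ for $n<0$. For $M\in\mathbb{Z}$ and $K,N\in\mathbb{N}$ with $K\ge1$, define the shifted Hankel determinant $D_{K,M}(N)=\det(a_{K,i+j+M})_{i,j=0}^{N-1}$, with $D_{K,M}(0)=1$. $\mathbb{N}=\{0,1,2,\dots\}$. *)

theory Defs
  imports "HOL-Computational_Algebra.Formal_Power_Series" "Jordan_Normal_Form.Determinant"
begin

text \<open>The square root of 1 - 2x - 3x^2 with constant term 1 (formal power series over the rationals).\<close>
definition motzkin_sqrt :: "rat fps" where
  "motzkin_sqrt = fps_radical (\<lambda>_ _. 1) 2 (1 - 2 * fps_X - 3 * fps_X ^ 2)"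

definition motzkin_F :: "rat fps" where
  "motzkin_F = (1 - fps_X - motzkin_sqrt) / (2 * fps_X ^ 2)"

definition powcoeff :: "'a::comm_ring_1 fps \<Rightarrow> nat \<Rightarrow> int \<Rightarrow> 'a" where
  "powcoeff F K n = (if n < 0 then 0 else fps_nth (F ^ K) (nat n))"

text \<open>Shifted Hankel determinant D_{K,M}(N) = det (a_{K,i+j+M})_{i,j=0}^{N-1}; the empty determinant is 1.\<close>
definition hankelD :: "'a::comm_ring_1 fps \<Rightarrow> nat \<Rightarrow> int \<Rightarrow> nat \<Rightarrow> 'a" where
  "hankelD F K M N = det (mat N N (\<lambda>(i, j). powcoeff F K (int i + int j + M)))"

end

theory Submission
  imports Defs
begin

text \<open>
  F is the solution of F = 1 + x F + x^2 F^2. Hence the Riordan array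
  T(n, k) = [x^n] x^k F^(k+1) (the Motzkin triangle) is unit lower triangular with
  T(n+1, k) = T(n, k-1) + T(n, k) + T(n, k+1), and a_{2,n-1} = T(n, 1). Summing this recurrence
  gives a_{2,i+j-1} = sum_k T(i, k) (J T^t)(k, j), where J is the tridiagonal 0/1 matrix, so the
  Hankel matrix of shift -1 is T J T^t and D_{2,-1}(n) = det J_n. For the shifts -2 and -3 one
  prepends to J one or two columns v whose images under the recurrence are e_1, resp. the
  previous such column, and replaces the right factor by diag(I, T); the determinants of these
  bordered Jacobi matrices follow from expansion along the last row.
\<close>

lemma motzkin_sqrt_squared: "motzkin_sqrt ^ 2 = 1 - 2 * fps_X - 3 * fps_X ^ 2"
proof -
  have "fps_radical (\<lambda>_ _. 1::rat) (Suc 1) (1 - 2 * fps_X - 3 * fps_X ^ 2) ^ Suc 1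
          = 1 - 2 * fps_X - 3 * fps_X ^ 2"
    by (subst power_radical[symmetric]) simp_all
  then show ?thesis by (simp add: motzkin_sqrt_def numeral_2_eq_2)
qed

lemma motzkin_sqrt_nth_0: "fps_nth motzkin_sqrt 0 = 1"
  by (simp add: motzkin_sqrt_def)

lemma motzkin_sqrt_nth_1: "fps_nth motzkin_sqrt 1 = -1"
proof -
  have "2 * fps_nth motzkin_sqrt 1 = fps_nth (motzkin_sqrt ^ 2) 1"
    by (simp add: fps_square_nth motzkin_sqrt_nth_0)
  also have "\<dots> = -2" by (simp add: motzkin_sqrt_squared)
  finally show ?thesis by simp
qed

lemma motzkin_F_times_denominator: "motzkin_F * (2 * fps_X ^ 2) = 1 - fps_X - motzkin_sqrt"
proof (cases "1 - fps_X - motzkin_sqrt = 0")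
  case False
  have "subdegree (1 - fps_X - motzkin_sqrt) \<ge> 2"
    by (rule subdegree_geI[OF False])
       (auto simp: less_2_cases_iff motzkin_sqrt_nth_0 motzkin_sqrt_nth_1[unfolded One_nat_def])
  then show ?thesis
    unfolding motzkin_F_def by (intro fps_times_divide_eq) simp_all
qed (simp add: motzkin_F_def)

lemma motzkin_F_functional_eq: "motzkin_F = 1 + fps_X * motzkin_F + fps_X ^ 2 * motzkin_F ^ 2"
proof -
  let ?F = motzkin_F and ?X = "fps_X :: rat fps"
  have "motzkin_sqrt = 1 - ?X - 2 * ?X ^ 2 * ?F"
    using motzkin_F_times_denominator by (simp add: algebra_simps)
  then have "(1 - ?X - 2 * ?X ^ 2 * ?F) ^ 2 = 1 - 2 * ?X - 3 * ?X ^ 2"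
    using motzkin_sqrt_squared by simp
  then have "(4 * ?X ^ 2) * (1 + ?X * ?F + ?X ^ 2 * ?F ^ 2 - ?F) = 0"
    by (simp add: algebra_simps power2_eq_square numeral_eq_Suc)
  then show ?thesis by simp
qed

lemma motzkin_F_nth_0: "fps_nth motzkin_F 0 = 1"
  using arg_cong[OF motzkin_F_functional_eq, of "\<lambda>f. fps_nth f 0"] by simp

definition motzkin_tri :: "nat \<Rightarrow> nat \<Rightarrow> rat" where
  "motzkin_tri n k = fps_nth (fps_X ^ k * motzkin_F ^ Suc k) n"

lemma motzkin_tri_eq_0: "n < k \<Longrightarrow> motzkin_tri n k = 0"
  by (simp add: motzkin_tri_def fps_X_power_mult_nth)

lemma motzkin_tri_diag: "motzkin_tri n n = 1"
  by (simp add: motzkin_tri_def fps_X_power_mult_nth fps_nth_power_0 motzkin_F_nth_0)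

lemma motzkin_tri_0_left: "motzkin_tri 0 k = (if k = 0 then 1 else 0)"
  using motzkin_tri_eq_0[of 0 k] motzkin_tri_diag[of 0] by auto

lemma motzkin_tri_Suc:
  "motzkin_tri (Suc n) k =
     (if k = 0 then 0 else motzkin_tri n (k - 1)) + motzkin_tri n k + motzkin_tri n (Suc k)"
proof -
  let ?F = motzkin_F and ?X = "fps_X :: rat fps"
  have "?X ^ k * ?F ^ Suc k = ?X ^ k * ?F ^ k * (1 + ?X * ?F + ?X ^ 2 * ?F ^ 2)"
    using arg_cong[OF motzkin_F_functional_eq, of "\<lambda>G. ?X ^ k * ?F ^ k * G"]
    by (simp add: mult.commute)
  also have "\<dots> = ?X ^ k * ?F ^ k + ?X * (?X ^ k * ?F ^ Suc k)
                   + ?X * (?X ^ Suc k * ?F ^ Suc (Suc k))"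
    by (simp add: algebra_simps power2_eq_square)
  finally have "motzkin_tri (Suc n) k = fps_nth (?X ^ k * ?F ^ k + ?X * (?X ^ k * ?F ^ Suc k)
                   + ?X * (?X ^ Suc k * ?F ^ Suc (Suc k))) (Suc n)"
    by (simp only: motzkin_tri_def)
  then have "motzkin_tri (Suc n) k = fps_nth (?X ^ k * ?F ^ k) (Suc n)
               + motzkin_tri n k + motzkin_tri n (Suc k)"
    by (simp only: fps_add_nth fps_X_mult_nth motzkin_tri_def) simp
  moreover have "fps_nth (?X ^ k * ?F ^ k) (Suc n) = (if k = 0 then 0 else motzkin_tri n (k - 1))"
    by (cases k) (simp_all add: motzkin_tri_def mult.assoc)
  ultimately show ?thesis by simp
qed

text \<open>The production matrix of the Riordan array: row n+1 of T is row n of T times it.\<close>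

definition motzkin_step :: "(nat \<Rightarrow> rat) \<Rightarrow> nat \<Rightarrow> rat" where
  "motzkin_step v k = (if k = 0 then 0 else v (k - 1)) + v k + v (Suc k)"

definition row_comb :: "nat \<Rightarrow> (nat \<Rightarrow> rat) \<Rightarrow> rat" where
  "row_comb i v = (\<Sum>k\<le>i. motzkin_tri i k * v k)"

lemma row_comb_eq_sum: "i < K \<Longrightarrow> (\<Sum>k<K. motzkin_tri i k * v k) = row_comb i v"
  unfolding row_comb_def by (rule sum.mono_neutral_right) (auto simp: motzkin_tri_eq_0)

lemma row_comb_0: "row_comb 0 v = v 0"
  by (simp add: row_comb_def motzkin_tri_0_left)

lemma row_comb_Suc: "row_comb (Suc i) v = row_comb i (motzkin_step v)"
proof -
  let ?T = "motzkin_tri i" and ?K = "Suc (Suc i)"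
  have "row_comb (Suc i) v = (\<Sum>k<?K. (if k = 0 then 0 else ?T (k - 1)) * v k)
          + (\<Sum>k<?K. ?T k * v k) + (\<Sum>k<?K. ?T (Suc k) * v k)"
    by (simp add: row_comb_def motzkin_tri_Suc lessThan_Suc_atMost[symmetric] sum.distrib
        algebra_simps del: sum.lessThan_Suc)
  also have "(\<Sum>k<?K. (if k = 0 then 0 else ?T (k - 1)) * v k) = (\<Sum>k<Suc i. ?T k * v (Suc k))"
    by (subst sum.lessThan_Suc_shift) simp
  also have "(\<Sum>k<?K. ?T k * v k) = (\<Sum>k<Suc i. ?T k * v k)"
    by (simp add: motzkin_tri_eq_0)
  also have "(\<Sum>k<?K. ?T (Suc k) * v k) = (\<Sum>k<Suc i. ?T k * (if k = 0 then 0 else v (k - 1)))"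
    by (subst (2) sum.lessThan_Suc_shift) (simp add: motzkin_tri_eq_0)
  finally show ?thesis
    by (simp add: row_comb_def motzkin_step_def lessThan_Suc_atMost[symmetric] sum.distrib
        algebra_simps del: sum.lessThan_Suc)
qed

text \<open>Column j of J T^t, where J is the matrix jacobi defined below.\<close>

definition jacobi_col :: "nat \<Rightarrow> nat \<Rightarrow> rat" where
  "jacobi_col j k = (if k = 0 then 0 else motzkin_tri j (k - 1)) + motzkin_tri j (Suc k)"

lemma motzkin_step_jacobi_col: "motzkin_step (jacobi_col j) = jacobi_col (Suc j)"
proof
  fix k show "motzkin_step (jacobi_col j) k = jacobi_col (Suc j) k"
    by (cases k; cases "k - 1") (auto simp: motzkin_step_def jacobi_col_def motzkin_tri_Suc)
qed

lemma row_comb_jacobi_col: "row_comb i (jacobi_col j) = motzkin_tri (i + j) 1"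
  by (induction i arbitrary: j)
     (simp_all add: row_comb_0 row_comb_Suc motzkin_step_jacobi_col jacobi_col_def)

definition pre_e1 :: "nat \<Rightarrow> rat" where
  "pre_e1 k = (if k mod 3 = 2 then 1 else if k mod 3 = 0 \<and> k > 0 then -1 else 0)"

definition pre2_e1 :: "nat \<Rightarrow> rat" where
  "pre2_e1 k = (if k mod 3 = 1 then - 2 * of_nat (k div 3) else of_nat (k div 3))"

lemma mod_3_cases:
  fixes k :: nat
  obtains m where "k = 3 * m" | m where "k = 3 * m + 1" | m where "k = 3 * m + 2"
proof -
  have "k = 3 * (k div 3) + k mod 3" "k mod 3 = 0 \<or> k mod 3 = 1 \<or> k mod 3 = 2"
    by arith+
  then show ?thesis using that by fastforce
qed

lemma mod_div_3_Suc:
  fixes m :: nat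
  shows "Suc (3 * m) mod 3 = 1" "Suc (3 * m) div 3 = m"
    "Suc (Suc (3 * m)) mod 3 = 2" "Suc (Suc (3 * m)) div 3 = m"
    "(3 + 3 * m) mod 3 = 0" "(3 + 3 * m) div 3 = Suc m"
  by presburger+

lemma motzkin_step_pre_e1: "motzkin_step pre_e1 = (\<lambda>k. if k = 1 then 1 else 0)"
proof
  fix k show "motzkin_step pre_e1 k = (if k = 1 then 1 else 0)"
    by (cases k rule: mod_3_cases; cases "k div 3")
       (auto simp: motzkin_step_def pre_e1_def mod_div_3_Suc)
qed

lemma motzkin_step_pre2_e1: "motzkin_step pre2_e1 = pre_e1"
proof
  fix k show "motzkin_step pre2_e1 k = pre_e1 k"
    by (cases k rule: mod_3_cases; cases "k div 3")
       (auto simp: motzkin_step_def pre_e1_def pre2_e1_def mod_div_3_Suc)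
qed

lemma row_comb_pre_e1: "row_comb i pre_e1 = (if i = 0 then 0 else motzkin_tri (i - 1) 1)"
proof (cases i)
  case (Suc j)
  have "row_comb j (\<lambda>k. if k = 1 then 1 else 0) = motzkin_tri j 1"
    by (simp add: row_comb_def motzkin_tri_eq_0 if_distrib[of "(*) _"] cong: if_cong)
  then show ?thesis by (simp add: Suc row_comb_Suc motzkin_step_pre_e1)
qed (simp add: row_comb_0 pre_e1_def)

lemma row_comb_pre2_e1: "row_comb i pre2_e1 = (if i < 2 then 0 else motzkin_tri (i - 2) 1)"
  by (cases i) (simp_all add: row_comb_0 row_comb_Suc motzkin_step_pre2_e1 row_comb_pre_e1 pre2_e1_def)

lemma powcoeff_motzkin_F_2:
  "powcoeff motzkin_F 2 (int t - int (Suc m)) = (if t < m then 0 else motzkin_tri (t - m) 1)"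
proof (cases "m < t")
  case True
  then have "nat (int t - int (Suc m)) = t - Suc m" "t - m = Suc (t - Suc m)" by simp_all
  then show ?thesis
    using True by (simp add: powcoeff_def motzkin_tri_def power2_eq_square)
qed (auto simp: powcoeff_def motzkin_tri_eq_0)

lemma det_unit_lower_triangular:
  fixes A :: "nat \<Rightarrow> nat \<Rightarrow> 'a::comm_ring_1"
  assumes "\<And>i j. i < j \<Longrightarrow> A i j = 0" "\<And>i. A i i = 1"
  shows "det (mat N N (\<lambda>(i, j). A i j)) = 1"
proof -
  have "diag_mat (mat N N (\<lambda>(i, j). A i j)) = replicate N 1"
    by (rule nth_equalityI) (auto simp: diag_mat_def assms)
  then show ?thesis by (subst det_lower_triangular[of N]) (auto simp: assms)
qed

lemma det_unit_triangular_factorization: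
  fixes H L X Q :: "nat \<Rightarrow> nat \<Rightarrow> 'a::comm_ring_1"
  assumes H: "\<And>i j. i < N \<Longrightarrow> j < N \<Longrightarrow> H i j = (\<Sum>k<N. L i k * (\<Sum>l<N. X k l * Q j l))"
    and L: "\<And>i j. i < j \<Longrightarrow> L i j = 0" "\<And>i. L i i = 1"
    and Q: "\<And>i j. i < j \<Longrightarrow> Q i j = 0" "\<And>i. Q i i = 1"
  shows "det (mat N N (\<lambda>(i, j). H i j)) = det (mat N N (\<lambda>(k, l). X k l))"
proof -
  let ?L = "mat N N (\<lambda>(i, k). L i k)" and ?X = "mat N N (\<lambda>(k, l). X k l)"
    and ?Q = "mat N N (\<lambda>(j, l). Q j l)"
  have "mat N N (\<lambda>(i, j). H i j) = ?L * (?X * transpose_mat ?Q)"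
    by (rule eq_matI) (auto simp: H scalar_prod_def atLeast0LessThan intro!: sum.cong)
  moreover have "det (?L * (?X * transpose_mat ?Q)) = det ?L * (det ?X * det (transpose_mat ?Q))"
    by (subst det_mult[of _ N]) (auto intro!: arg_cong2[where f = "(*)"] det_mult)
  moreover have "det ?L = 1" by (rule det_unit_lower_triangular) (use L in auto)
  moreover have "det (transpose_mat ?Q) = 1"
    by (subst det_transpose[of _ N]) (auto intro: det_unit_lower_triangular Q)
  ultimately show ?thesis by simp
qed

lemma det_mat_swap: "det (mat n n (\<lambda>(i, j). f j i)) = det (mat n n (\<lambda>(i, j). f i j))"
proof -
  have "mat n n (\<lambda>(i, j). f j i) = transpose_mat (mat n n (\<lambda>(i, j). f i j))"
    by (rule eq_matI) auto
  then show ?thesis by (simp add: det_transpose[of _ n])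
qed

definition delete_col :: "(nat \<Rightarrow> nat \<Rightarrow> 'a) \<Rightarrow> nat \<Rightarrow> nat \<Rightarrow> nat \<Rightarrow> 'a" where
  "delete_col f c i j = f i (if j < c then j else Suc j)"

lemma det_mat_Suc_last_row:
  "det (mat (Suc n) (Suc n) (\<lambda>(i, j). f i j)) =
     (\<Sum>c\<le>n. (-1) ^ (n + c) * f n c * det (mat n n (\<lambda>(i, j). delete_col f c i j)))"
proof -
  let ?A = "mat (Suc n) (Suc n) (\<lambda>(i, j). f i j)"
  have "det ?A = (\<Sum>c<Suc n. ?A $$ (n, c) * cofactor ?A n c)"
    by (rule laplace_expansion_row) auto
  also have "\<dots> = (\<Sum>c\<le>n. (-1) ^ (n + c) * f n c * det (mat n n (\<lambda>(i, j). delete_col f c i j)))"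
  proof (rule sum.cong)
    fix c assume "c \<in> {..n}"
    moreover have "mat_delete ?A n c = mat n n (\<lambda>(i, j). delete_col f c i j)"
      unfolding mat_delete_def delete_col_def by (rule eq_matI) auto
    ultimately show "?A $$ (n, c) * cofactor ?A n c
                       = (-1) ^ (n + c) * f n c * det (mat n n (\<lambda>(i, j). delete_col f c i j))"
      by (simp add: cofactor_def)
  qed (simp add: lessThan_Suc_atMost)
  finally show ?thesis .
qed

lemma det_mat_Suc_last_row_single:
  assumes "a \<le> n" "\<And>j. j \<le> n \<Longrightarrow> j \<noteq> a \<Longrightarrow> f n j = 0"
  shows "det (mat (Suc n) (Suc n) (\<lambda>(i, j). f i j)) =
           (-1) ^ (n + a) * f n a * det (mat n n (\<lambda>(i, j). delete_col f a i j))"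
  unfolding det_mat_Suc_last_row using assms
  by (subst sum.mono_neutral_right[of _ "{a}"]) auto

lemma det_mat_Suc_last_row_pair:
  assumes "a < b" "b \<le> n" "\<And>j. j \<le> n \<Longrightarrow> j \<noteq> a \<Longrightarrow> j \<noteq> b \<Longrightarrow> f n j = 0"
  shows "det (mat (Suc n) (Suc n) (\<lambda>(i, j). f i j)) =
           (-1) ^ (n + a) * f n a * det (mat n n (\<lambda>(i, j). delete_col f a i j))
         + (-1) ^ (n + b) * f n b * det (mat n n (\<lambda>(i, j). delete_col f b i j))"
  unfolding det_mat_Suc_last_row using assms
  by (subst sum.mono_neutral_right[of _ "{a, b}"]) auto

definition jacobi :: "nat \<Rightarrow> nat \<Rightarrow> rat" where
  "jacobi k l = (if k = Suc l \<or> l = Suc k then 1 else 0)"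

lemma det_jacobi_Suc_Suc:
  "det (mat (Suc (Suc n)) (Suc (Suc n)) (\<lambda>(k, l). jacobi k l)) = - det (mat n n (\<lambda>(k, l). jacobi k l))"
proof -
  let ?M = "mat (Suc n) (Suc n) (\<lambda>(i, j). delete_col jacobi n i j)"
  have "det (mat (Suc (Suc n)) (Suc (Suc n)) (\<lambda>(k, l). jacobi k l)) = - det ?M"
    by (subst det_mat_Suc_last_row_single[of n]) (auto simp: jacobi_def)
  also have "det ?M = det (mat (Suc n) (Suc n) (\<lambda>(i, j). delete_col jacobi n j i))"
    by (rule det_mat_swap[symmetric])
  also have "\<dots> = det (mat n n (\<lambda>(i, j). delete_col (\<lambda>i j. delete_col jacobi n j i) n i j))"
    by (subst det_mat_Suc_last_row_single[of n]) (auto simp: jacobi_def delete_col_def)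
  also have "mat n n (\<lambda>(i, j). delete_col (\<lambda>i j. delete_col jacobi n j i) n i j)
               = mat n n (\<lambda>(k, l). jacobi k l)"
    by (rule eq_matI) (auto simp: jacobi_def delete_col_def)
  finally show ?thesis .
qed

lemma det_jacobi: "det (mat n n (\<lambda>(k, l). jacobi k l)) = (if odd n then 0 else (-1) ^ (n div 2))"
proof (induction n rule: nat_induct2)
  case 1
  then show ?case using det_mat_Suc_last_row[of 0 jacobi] by (simp add: jacobi_def)
next
  case (step n)
  then show ?case by (simp add: det_jacobi_Suc_Suc)
qed simp

definition bordered_jacobi :: "(nat \<Rightarrow> rat) list \<Rightarrow> nat \<Rightarrow> nat \<Rightarrow> rat" where
  "bordered_jacobi cs k l = (if l < length cs then (cs ! l) k else jacobi k (l - length cs))"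

lemma bordered_jacobi_Nil: "bordered_jacobi [] = jacobi"
  by (simp add: bordered_jacobi_def fun_eq_iff)

lemma det_bordered_jacobi_single_1: "det (mat 1 1 (\<lambda>(k, l). bordered_jacobi [v] k l)) = v 0"
  using det_mat_Suc_last_row[of 0 "bordered_jacobi [v]"] by (simp add: bordered_jacobi_def)

lemma det_bordered_jacobi_single_Suc:
  assumes "1 \<le> n"
  shows "det (mat (Suc n) (Suc n) (\<lambda>(k, l). bordered_jacobi [v] k l)) =
           det (mat n n (\<lambda>(k, l). bordered_jacobi [v] k l))
           + (-1) ^ n * v n * det (mat n n (\<lambda>(k, l). jacobi k l))"
proof -
  have "det (mat (Suc n) (Suc n) (\<lambda>(k, l). bordered_jacobi [v] k l)) =
          (-1) ^ (n + 0) * bordered_jacobi [v] n 0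
            * det (mat n n (\<lambda>(i, j). delete_col (bordered_jacobi [v]) 0 i j))
        + (-1) ^ (n + n) * bordered_jacobi [v] n n
            * det (mat n n (\<lambda>(i, j). delete_col (bordered_jacobi [v]) n i j))"
    using assms by (intro det_mat_Suc_last_row_pair) (auto simp: bordered_jacobi_def jacobi_def)
  moreover have "mat n n (\<lambda>(i, j). delete_col (bordered_jacobi [v]) 0 i j)
                   = mat n n (\<lambda>(k, l). jacobi k l)"
    "mat n n (\<lambda>(i, j). delete_col (bordered_jacobi [v]) n i j)
       = mat n n (\<lambda>(k, l). bordered_jacobi [v] k l)"
    by (auto intro!: eq_matI simp: delete_col_def bordered_jacobi_def)
  moreover have "bordered_jacobi [v] n 0 = v n" "bordered_jacobi [v] n n = 1"
    using assms by (auto simp: bordered_jacobi_def jacobi_def)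
  ultimately show ?thesis by (simp add: algebra_simps)
qed

lemma det_bordered_jacobi_pair_Suc:
  assumes "1 \<le> n"
  shows "det (mat (Suc n) (Suc n) (\<lambda>(k, l). bordered_jacobi [u, v] k l)) =
           (-1) ^ n * (u n * det (mat n n (\<lambda>(k, l). bordered_jacobi [v] k l))
                       - v n * det (mat n n (\<lambda>(k, l). bordered_jacobi [u] k l)))"
proof -
  have "det (mat (Suc n) (Suc n) (\<lambda>(k, l). bordered_jacobi [u, v] k l)) =
          (-1) ^ (n + 0) * bordered_jacobi [u, v] n 0
            * det (mat n n (\<lambda>(i, j). delete_col (bordered_jacobi [u, v]) 0 i j))
        + (-1) ^ (n + 1) * bordered_jacobi [u, v] n 1
            * det (mat n n (\<lambda>(i, j). delete_col (bordered_jacobi [u, v]) 1 i j))"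
    using assms by (intro det_mat_Suc_last_row_pair) (auto simp: bordered_jacobi_def jacobi_def)
  moreover have "mat n n (\<lambda>(i, j). delete_col (bordered_jacobi [u, v]) 0 i j)
                   = mat n n (\<lambda>(k, l). bordered_jacobi [v] k l)"
    "mat n n (\<lambda>(i, j). delete_col (bordered_jacobi [u, v]) 1 i j)
       = mat n n (\<lambda>(k, l). bordered_jacobi [u] k l)"
    by (auto intro!: eq_matI simp: delete_col_def bordered_jacobi_def nth_Cons')
  moreover have "bordered_jacobi [u, v] n 0 = u n" "bordered_jacobi [u, v] n 1 = v n"
    by (simp_all add: bordered_jacobi_def)
  ultimately show ?thesis by (simp add: algebra_simps)
qed

definition id_block_diag :: "nat \<Rightarrow> (nat \<Rightarrow> nat \<Rightarrow> rat) \<Rightarrow> nat \<Rightarrow> nat \<Rightarrow> rat" where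
  "id_block_diag m A j l =
     (if j < m then (if l = j then 1 else 0) else if l < m then 0 else A (j - m) (l - m))"

lemma sum_jacobi_motzkin_tri:
  assumes "j < M"
  shows "(\<Sum>l<M. jacobi k l * motzkin_tri j l) = jacobi_col j k"
proof -
  have "(\<Sum>l<M. jacobi k l * motzkin_tri j l)
          = (\<Sum>l<M. (if 0 < k \<and> l = k - 1 then motzkin_tri j (k - 1) else 0)
                     + (if l = Suc k then motzkin_tri j (Suc k) else 0))"
    by (rule sum.cong) (auto simp: jacobi_def)
  also have "\<dots> = jacobi_col j k"
    using assms by (auto simp: sum.distrib jacobi_col_def motzkin_tri_eq_0)
  finally show ?thesis .
qed

text \<open>The Hankel matrix factors as T * bordered_jacobi cs * diag(I, T)^t.\<close>

lemma hankel_motzkin_F_2_eq_det_bordered_jacobi: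
  assumes border: "\<And>i l. l < length cs \<Longrightarrow>
      row_comb i (cs ! l) = (if i + l < length cs then 0 else motzkin_tri (i + l - length cs) 1)"
  shows "hankelD motzkin_F 2 (- int (Suc (length cs))) N
           = det (mat N N (\<lambda>(k, l). bordered_jacobi cs k l))"
  unfolding hankelD_def
proof (rule det_unit_triangular_factorization
    [where L = motzkin_tri and Q = "id_block_diag (length cs) motzkin_tri"])
  fix i j assume "i < N" "j < N"
  let ?m = "length cs" and ?B = "bordered_jacobi cs" and ?Q = "id_block_diag (length cs) motzkin_tri"
  have "int i + int j + - int (Suc ?m) = int (i + j) - int (Suc ?m)" by simp
  then have coeff: "powcoeff motzkin_F 2 (int i + int j + - int (Suc ?m))
                      = (if i + j < ?m then 0 else motzkin_tri (i + j - ?m) 1)"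
    by (simp only: powcoeff_motzkin_F_2)
  show "powcoeff motzkin_F 2 (int i + int j + - int (Suc ?m))
          = (\<Sum>k<N. motzkin_tri i k * (\<Sum>l<N. ?B k l * ?Q j l))"
  proof (cases "j < ?m")
    case True
    have "(\<Sum>l<N. ?B k l * ?Q j l) = (cs ! j) k" for k
      using True \<open>j < N\<close>
      by (simp add: id_block_diag_def bordered_jacobi_def if_distrib[of "(*) _"] cong: if_cong)
    then show ?thesis
      unfolding coeff using True \<open>i < N\<close> by (simp add: row_comb_eq_sum border)
  next
    case False
    have "(\<Sum>l<N. ?B k l * ?Q j l)
            = (\<Sum>l\<in>{?m..<N}. jacobi k (l - ?m) * motzkin_tri (j - ?m) (l - ?m))" for k
      using False
      by (intro sum.mono_neutral_cong_right) (auto simp: id_block_diag_def bordered_jacobi_def)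
    also have "\<dots> k = (\<Sum>l<N - ?m. jacobi k l * motzkin_tri (j - ?m) l)" for k
      by (subst sum.atLeastLessThan_shift_0) (simp add: atLeast0LessThan)
    also have "\<dots> k = jacobi_col (j - ?m) k" for k
      using False \<open>j < N\<close> by (intro sum_jacobi_motzkin_tri) simp
    finally show ?thesis
      unfolding coeff using False \<open>i < N\<close> by (simp add: row_comb_eq_sum row_comb_jacobi_col)
  qed
qed (auto simp: id_block_diag_def motzkin_tri_eq_0 motzkin_tri_diag)

lemma hankel_motzkin_F_2_minus_1: "hankelD motzkin_F 2 (-1) n = det (mat n n (\<lambda>(k, l). jacobi k l))"
  using hankel_motzkin_F_2_eq_det_bordered_jacobi[of "[]" n] by (simp add: bordered_jacobi_Nil)

lemma hankel_motzkin_F_2_minus_2: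
  "hankelD motzkin_F 2 (-2) n = det (mat n n (\<lambda>(k, l). bordered_jacobi [pre_e1] k l))"
  using hankel_motzkin_F_2_eq_det_bordered_jacobi[of "[pre_e1]" n] by (simp add: row_comb_pre_e1)

lemma hankel_motzkin_F_2_minus_3:
  "hankelD motzkin_F 2 (-3) n = det (mat n n (\<lambda>(k, l). bordered_jacobi [pre2_e1, pre_e1] k l))"
proof -
  have "hankelD motzkin_F 2 (- int (Suc (length [pre2_e1, pre_e1]))) n
          = det (mat n n (\<lambda>(k, l). bordered_jacobi [pre2_e1, pre_e1] k l))"
    by (rule hankel_motzkin_F_2_eq_det_bordered_jacobi)
       (auto simp: less_Suc_eq numeral_2_eq_2 row_comb_pre_e1 row_comb_pre2_e1)
  then show ?thesis by simp
qed

lemma mod_12_cases: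
  fixes n :: nat
  shows "n mod 12 = 0 \<or> n mod 12 = 1 \<or> n mod 12 = 2 \<or> n mod 12 = 3 \<or> n mod 12 = 4
       \<or> n mod 12 = 5 \<or> n mod 12 = 6 \<or> n mod 12 = 7 \<or> n mod 12 = 8 \<or> n mod 12 = 9
       \<or> n mod 12 = 10 \<or> n mod 12 = 11"
  by arith

lemma mod_12_reduce:
  fixes n :: nat
  shows "n mod 3 = (n mod 12) mod 3" "n div 3 = 4 * (n div 12) + (n mod 12) div 3"
    "n mod 4 = (n mod 12) mod 4" "even n \<longleftrightarrow> even (n mod 12)"
    "Suc n mod 12 = (if n mod 12 = 11 then 0 else Suc (n mod 12))"
    "Suc n div 12 = (if n mod 12 = 11 then Suc (n div 12) else n div 12)"
  by (simp_all add: mod_mod_cancel mod_Suc div_Suc) presburger+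

lemma minus_one_power_div_2: "(-1 :: rat) ^ (n div 2) = (if n mod 4 < 2 then 1 else -1)"
proof -
  have "even (n div 2) \<longleftrightarrow> n mod 4 < 2" by presburger
  then show ?thesis by (simp add: minus_one_power_iff)
qed

lemma det_jacobi_mod_4:
  "det (mat n n (\<lambda>(k, l). jacobi k l)) = (if n mod 4 = 0 then 1 else if n mod 4 = 2 then -1 else 0)"
proof -
  have "odd n \<longleftrightarrow> n mod 4 = 1 \<or> n mod 4 = 3" by presburger
  then show ?thesis by (auto simp: det_jacobi minus_one_power_div_2)
qed

text \<open>
  Unrolled, the recursion gives v 0 + sum_{1 <= k < n} (-1)^k v k det J_k. With v 3-periodic up to
  a linear drift and det J_k 4-periodic, this is 12-periodic up to a linear drift, which is where the
  case distinctions mod 12 come from.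
\<close>

lemma det_bordered_jacobi_pre_e1:
  "det (mat n n (\<lambda>(k, l). bordered_jacobi [pre_e1] k l)) =
     (if n mod 12 \<in> {0, 9, 10, 11} then 1 else if n mod 12 \<in> {1, 2, 7, 8} then 0 else -1)"
proof (induction n)
  case (Suc n)
  show ?case
  proof (cases "n = 0")
    case True
    have "pre_e1 0 = 0" by (simp add: pre_e1_def)
    with True show ?thesis using det_bordered_jacobi_single_1[of pre_e1] by simp
  next
    case False
    have "det (mat (Suc n) (Suc n) (\<lambda>(k, l). bordered_jacobi [pre_e1] k l)) =
            det (mat n n (\<lambda>(k, l). bordered_jacobi [pre_e1] k l))
            + (-1) ^ n * pre_e1 n * det (mat n n (\<lambda>(k, l). jacobi k l))"
      using False by (simp add: det_bordered_jacobi_single_Suc)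
    also have "\<dots> = (if Suc n mod 12 \<in> {0, 9, 10, 11} then 1
                       else if Suc n mod 12 \<in> {1, 2, 7, 8} then 0 else -1)"
      unfolding Suc.IH det_jacobi_mod_4 pre_e1_def minus_one_power_iff mod_12_reduce(1, 3, 4, 5)[of n]
      using mod_12_cases[of n] False by (elim disjE) simp_all
    finally show ?thesis .
  qed
qed simp

lemma det_bordered_jacobi_pre2_e1:
  assumes "1 \<le> n"
  shows "det (mat n n (\<lambda>(k, l). bordered_jacobi [pre2_e1] k l)) =
     (let q = of_nat (n div 12); r = n mod 12 in
        if r = 0 then 4 * q else if r \<in> {1, 2} then 8 * q else if r \<in> {3, 4} then 4 * q
        else if r \<in> {5, 6, 9, 10} then -4 * q - 2 else if r \<in> {7, 8} then -8 * q - 4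
        else 4 * q + 4)"
  using assms
proof (induction n)
  case (Suc n)
  show ?case
  proof (cases "n = 0")
    case True
    have "pre2_e1 0 = 0" by (simp add: pre2_e1_def)
    with True show ?thesis using det_bordered_jacobi_single_1[of pre2_e1] by simp
  next
    case False
    then have pos: "1 \<le> n" by simp
    have "det (mat (Suc n) (Suc n) (\<lambda>(k, l). bordered_jacobi [pre2_e1] k l)) =
            det (mat n n (\<lambda>(k, l). bordered_jacobi [pre2_e1] k l))
            + (-1) ^ n * pre2_e1 n * det (mat n n (\<lambda>(k, l). jacobi k l))"
      using False by (simp add: det_bordered_jacobi_single_Suc)
    also have "\<dots> = (let q = of_nat (Suc n div 12); r = Suc n mod 12 in
        if r = 0 then 4 * q else if r \<in> {1, 2} then 8 * q else if r \<in> {3, 4} then 4 * q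
        else if r \<in> {5, 6, 9, 10} then -4 * q - 2 else if r \<in> {7, 8} then -8 * q - 4
        else 4 * q + 4)"
      unfolding Suc.IH[OF pos] det_jacobi_mod_4 pre2_e1_def minus_one_power_iff mod_12_reduce[of n] Let_def
      using mod_12_cases[of n] False by (elim disjE) (simp_all add: algebra_simps)
    finally show ?thesis .
  qed
qed simp

lemma hankel_motzkin_F_2_minus_3_closed_form:
  assumes "2 \<le> n"
  shows "let k = n div 12; r = n mod 12 in
           hankelD motzkin_F 2 (-3) n =
             (if r \<in> {0, 4} then 1
              else if r \<in> {2, 8} then 0
              else if r \<in> {6, 10} then -1
              else if r = 1 then 8 * of_nat k
              else if r = 3 then - 8 * of_nat k
              else if r = 5 then 8 * of_nat k + 2
              else if r = 7 then - 8 * of_nat k - 4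
              else if r = 9 then 8 * of_nat k + 4
              else - 8 * of_nat k - 6)"
proof -
  obtain m where n: "n = Suc m" and m: "1 \<le> m"
    using assms by (cases n) auto
  have "hankelD motzkin_F 2 (-3) n =
          (-1) ^ m * (pre2_e1 m * det (mat m m (\<lambda>(k, l). bordered_jacobi [pre_e1] k l))
                      - pre_e1 m * det (mat m m (\<lambda>(k, l). bordered_jacobi [pre2_e1] k l)))"
    unfolding hankel_motzkin_F_2_minus_3 n using m by (rule det_bordered_jacobi_pair_Suc)
  then show ?thesis
    unfolding det_bordered_jacobi_pre_e1 det_bordered_jacobi_pre2_e1[OF m] n
      pre_e1_def pre2_e1_def minus_one_power_iff mod_12_reduce[of m] Let_def
    using mod_12_cases[of m] m by (elim disjE) (simp_all add: algebra_simps)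
qed

theorem proposition4p3:
  shows "(\<forall>n. hankelD motzkin_F 2 (-1) n =
            (if n mod 4 = 0 then 1 else if n mod 4 = 2 then -1 else 0))
       \<and> (\<forall>n. hankelD motzkin_F 2 (-2) n =
            (if n mod 12 \<in> {0, 9, 10, 11} then 1
             else if n mod 12 \<in> {1, 2, 7, 8} then 0 else -1))
       \<and> (\<forall>n. n \<ge> 4 \<longrightarrow>
            (let k = n div 12; r = n mod 12 in
             hankelD motzkin_F 2 (-3) n =
              (if r \<in> {0, 4} then 1
               else if r \<in> {2, 8} then 0
               else if r \<in> {6, 10} then -1
               else if r = 1 then 8 * of_nat k
               else if r = 3 then - 8 * of_nat k
               else if r = 5 then 8 * of_nat k + 2
               else if r = 7 then - 8 * of_nat k - 4
               else if r = 9 then 8 * of_nat k + 4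
               else - 8 * of_nat k - 6)))"
  using hankel_motzkin_F_2_minus_1 det_jacobi_mod_4
    hankel_motzkin_F_2_minus_2 det_bordered_jacobi_pre_e1
    hankel_motzkin_F_2_minus_3_closed_form
  by simp

end
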